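(* There are infinitely many positive integers $n$ such that $$H_{4n}(K_{2,3})\ge\left(\frac{1+\sqrt5}{2}\right)^{n-o(n)}.$$
   Context: For a graph $G$, $H_m(G)$ denotes the maximum number of Hamilton paths in the complete graph $K_m$ such that the union of any two of them contains $G$ as a subgraph. $K_{2,3}$ is the complete bipartite graph with parts of sizes 2 and 3. *)

theory Defs
  imports Complex_Main
begin

definition path_edges :: "nat list \<Rightarrow> nat set set" where
  "path_edges p = {{p ! i, p ! Suc i} | i. Suc i < length p}"

text \<open>Hamilton paths of the complete graph K_m on vertex set {0..<m}, viewed as
  subgraphs (edge sets), so a path and its reversal are the same Hamilton path.\<close>
definition hamilton_paths :: "nat \<Rightarrow> nat set set set" where
  "hamilton_paths m = {path_edges p | p. distinct p \<and> set p = {0..<m}}"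

definition contains_subgraph :: "nat set set \<Rightarrow> 'a set \<Rightarrow> 'a set set \<Rightarrow> bool" where
  "contains_subgraph E V EG \<longleftrightarrow>
     (\<exists>f. inj_on f V \<and> (\<forall>e\<in>EG. f ` e \<in> E))"

definition H :: "nat \<Rightarrow> 'a set \<Rightarrow> 'a set set \<Rightarrow> nat" where
  "H m V EG = Max {card F | F. F \<subseteq> hamilton_paths m \<and>
      (\<forall>P\<in>F. \<forall>Q\<in>F. P \<noteq> Q \<longrightarrow> contains_subgraph (P \<union> Q) V EG)}"

definition K23_V :: "nat set" where "K23_V = {0..<5}"
definition K23_E :: "nat set set" where
  "K23_E = {{i, j} | i j. i \<in> {0,1} \<and> j \<in> {2,3,4}}"

end

theory Submission
  imports Defs "HOL-Library.Infinite_Set"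
begin

text \<open>Split the vertices 0..<5m into m blocks of five. On each block a path runs either
  straight through it, 0-1-2-3-4, or as 2-0-3-1-4 (up to the shift 5j); the union of the
  two contains K_{2,3} with parts {1,3} and {0,2,4}. Concatenating one of the two
  choices per block gives, for every subset A of the blocks, a Hamilton path of K_{5m};
  two different subsets disagree on some block, so the union of their paths contains
  K_{2,3}. A single path has maximum degree 2 and cannot contain K_{2,3}, so these 2^m
  paths are pairwise different. Hence H_{5m}(K_{2,3}) \<ge> 2^m, and for n = 5k this gives
  H_{4n}(K_{2,3}) \<ge> 16^k \<ge> ((1 + sqrt 5)/2)^n, with no o(n) loss at all.\<close>

lemma path_edges_nth: "Suc i < length p \<Longrightarrow> {p ! i, p ! Suc i} \<in> path_edges p"
  unfolding path_edges_def by blast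

lemma path_edges_append_left: "path_edges xs \<subseteq> path_edges (xs @ ys)"
proof
  fix e assume "e \<in> path_edges xs"
  then obtain i where "e = {xs ! i, xs ! Suc i}" "Suc i < length xs"
    unfolding path_edges_def by blast
  then show "e \<in> path_edges (xs @ ys)"
    using path_edges_nth[of i "xs @ ys"] by (simp add: nth_append)
qed

lemma path_edges_append_right: "path_edges ys \<subseteq> path_edges (xs @ ys)"
proof
  fix e assume "e \<in> path_edges ys"
  then obtain i where "e = {ys ! i, ys ! Suc i}" "Suc i < length ys"
    unfolding path_edges_def by blast
  then show "e \<in> path_edges (xs @ ys)"
    using path_edges_nth[of "length xs + i" "xs @ ys"] by (simp add: nth_append)
qed

lemma path_edges_concat: "xs \<in> set L \<Longrightarrow> path_edges xs \<subseteq> path_edges (concat L)"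
  by (induction L) (use path_edges_append_left path_edges_append_right in fastforce)+

lemma finite_path_edges: "finite (path_edges p)"
proof -
  have "path_edges p = (\<lambda>i. {p ! i, p ! Suc i}) ` {i. Suc i < length p}"
    unfolding path_edges_def by auto
  moreover have "finite {i. Suc i < length p}"
    by (rule finite_subset[of _ "{..<length p}"]) auto
  ultimately show ?thesis by simp
qed

lemma path_edges_degree_le_2:
  assumes "distinct p"
  shows "card {e \<in> path_edges p. v \<in> e} \<le> 2"
proof (cases "v \<in> set p")
  case False
  then have "{e \<in> path_edges p. v \<in> e} = {}"
    unfolding path_edges_def by (auto dest: nth_mem Suc_lessD)
  then show ?thesis by (simp only: card.empty)
next
  case True
  then obtain k where k: "k < length p" "p ! k = v" by (meson in_set_conv_nth)
  have "{e \<in> path_edges p. v \<in> e} \<subseteq> {{p ! (k - 1), p ! k}, {p ! k, p ! Suc k}}"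
  proof
    fix e assume "e \<in> {e \<in> path_edges p. v \<in> e}"
    then obtain i where i: "e = {p ! i, p ! Suc i}" "Suc i < length p" "v \<in> e"
      unfolding path_edges_def by blast
    then have "i = k \<or> Suc i = k"
      using k assms nth_eq_iff_index_eq by (metis Suc_lessD insert_iff singletonD)
    then show "e \<in> {{p ! (k - 1), p ! k}, {p ! k, p ! Suc k}}" using i by auto
  qed
  then have "card {e \<in> path_edges p. v \<in> e} \<le> card {{p ! (k - 1), p ! k}, {p ! k, p ! Suc k}}"
    by (rule card_mono[rotated]) simp
  also have "\<dots> \<le> 2" by (simp add: card_insert_if)
  finally show ?thesis .
qed

lemma contains_subgraph_mono:
  "E \<subseteq> E' \<Longrightarrow> contains_subgraph E V EG \<Longrightarrow> contains_subgraph E' V EG"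
  unfolding contains_subgraph_def by blast

lemma path_not_contains_K23:
  assumes "distinct p"
  shows "\<not> contains_subgraph (path_edges p) K23_V K23_E"
proof
  assume "contains_subgraph (path_edges p) K23_V K23_E"
  then obtain f where f: "inj_on f {0..<5}" "\<forall>e\<in>K23_E. f ` e \<in> path_edges p"
    unfolding contains_subgraph_def K23_V_def by auto
  have "{0,2} \<in> K23_E" "{0,3} \<in> K23_E" "{0,4} \<in> K23_E"
    unfolding K23_E_def by blast+
  then have "{{f 0, f 2}, {f 0, f 3}, {f 0, f 4}} \<subseteq> {e \<in> path_edges p. f 0 \<in> e}"
    using f(2) by auto
  then have "card {{f 0, f 2}, {f 0, f 3}, {f 0, f 4}} \<le> card {e \<in> path_edges p. f 0 \<in> e}"
    by (rule card_mono[rotated]) (simp add: finite_path_edges)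
  then have "card {{f 0, f 2}, {f 0, f 3}, {f 0, f 4}} \<le> 2"
    using path_edges_degree_le_2[OF assms, of "f 0"] by linarith
  moreover have "f 0 \<noteq> f 2" "f 0 \<noteq> f 3" "f 0 \<noteq> f 4" "f 2 \<noteq> f 3" "f 2 \<noteq> f 4" "f 3 \<noteq> f 4"
    using f(1) unfolding inj_on_def by (auto dest!: bspec)
  then have "card {{f 0, f 2}, {f 0, f 3}, {f 0, f 4}} = 3"
    by (auto simp: doubleton_eq_iff)
  ultimately show False by simp
qed

definition block_path :: "bool \<Rightarrow> nat \<Rightarrow> nat list" where
  "block_path b j = map (\<lambda>t. 5 * j + t) (if b then [0, 1, 2, 3, 4] else [2, 0, 3, 1, 4])"

definition blocks_path :: "nat set \<Rightarrow> nat \<Rightarrow> nat list" where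
  "blocks_path A m = concat (map (\<lambda>j. block_path (j \<in> A) j) [0..<m])"

lemma set_block_path: "set (block_path b j) = {5 * j..<5 * j + 5}"
proof -
  have "{5 * j..<5 * j + 5} = {5 * j, 5 * j + 1, 5 * j + 2, 5 * j + 3, 5 * j + 4}" by auto
  then show ?thesis by (cases b) (auto simp: block_path_def)
qed

lemma distinct_block_path: "distinct (block_path b j)"
  by (cases b) (auto simp: block_path_def)

lemma blocks_path_hamiltonian: "distinct (blocks_path A m) \<and> set (blocks_path A m) = {0..<5 * m}"
proof (induction m)
  case 0
  then show ?case by (simp add: blocks_path_def)
next
  case (Suc m)
  have "blocks_path A (Suc m) = blocks_path A m @ block_path (m \<in> A) m"
    by (simp add: blocks_path_def)
  then show ?case
    using Suc distinct_block_path[of "m \<in> A" m] set_block_path[of "m \<in> A" m] by auto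
qed

lemma blocks_path_in_hamilton_paths: "path_edges (blocks_path A m) \<in> hamilton_paths (5 * m)"
  unfolding hamilton_paths_def using blocks_path_hamiltonian by blast

lemma block_paths_union_contains_K23:
  "contains_subgraph (path_edges (block_path True j) \<union> path_edges (block_path False j))
     K23_V K23_E"
proof -
  define g :: "nat \<Rightarrow> nat" where "g v = 5 * j + [1, 3, 0, 2, 4] ! v" for v
  have g: "g 0 = 5*j+1" "g 1 = 5*j+3" "g 2 = 5*j" "g 3 = 5*j+2" "g 4 = 5*j+4"
    by (simp_all add: g_def)
  have V: "K23_V = {0, 1, 2, 3, 4}" unfolding K23_V_def by auto
  have inj: "inj_on g K23_V" unfolding V inj_on_def using g by auto
  have "{5*j, 5*j+1} \<in> path_edges (block_path True j)"
       "{5*j+1, 5*j+2} \<in> path_edges (block_path True j)"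
       "{5*j+2, 5*j+3} \<in> path_edges (block_path True j)"
       "{5*j+3, 5*j+4} \<in> path_edges (block_path True j)"
       "{5*j, 5*j+3} \<in> path_edges (block_path False j)"
       "{5*j+1, 5*j+4} \<in> path_edges (block_path False j)"
    using path_edges_nth[of 0 "block_path True j"] path_edges_nth[of 1 "block_path True j"]
      path_edges_nth[of 2 "block_path True j"] path_edges_nth[of 3 "block_path True j"]
      path_edges_nth[of 1 "block_path False j"] path_edges_nth[of 3 "block_path False j"]
    by (simp_all add: block_path_def)
  then have "g ` {a, b} \<in> path_edges (block_path True j) \<union> path_edges (block_path False j)"
    if "a \<in> {0, 1}" "b \<in> {2, 3, 4}" for a b
    using that g by (auto simp: insert_commute)
  then have "\<forall>e\<in>K23_E. g ` e \<in> path_edges (block_path True j) \<union> path_edges (block_path False j)"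
    unfolding K23_E_def by blast
  then show ?thesis unfolding contains_subgraph_def using inj by blast
qed

lemma blocks_paths_union_contains_K23:
  assumes "A \<subseteq> {0..<m}" "B \<subseteq> {0..<m}" "A \<noteq> B"
  shows "contains_subgraph (path_edges (blocks_path A m) \<union> path_edges (blocks_path B m))
           K23_V K23_E"
proof -
  obtain j where j: "j < m" "(j \<in> A) \<noteq> (j \<in> B)"
    using assms by (metis atLeastLessThan_iff subsetD subset_antisym subsetI)
  have block_sub: "path_edges (block_path (j \<in> C) j) \<subseteq> path_edges (blocks_path C m)" for C
    unfolding blocks_path_def by (rule path_edges_concat) (simp add: j(1))
  have "path_edges (block_path True j) \<union> path_edges (block_path False j)
          \<subseteq> path_edges (blocks_path A m) \<union> path_edges (blocks_path B m)"
    using block_sub[of A] block_sub[of B] j(2) by (cases "j \<in> A") auto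
  then show ?thesis using block_paths_union_contains_K23 contains_subgraph_mono by blast
qed

lemma finite_hamilton_paths: "finite (hamilton_paths m)"
proof (rule finite_subset)
  show "hamilton_paths m \<subseteq> Pow (Pow {0..<m})"
    unfolding hamilton_paths_def path_edges_def by (auto dest: nth_mem Suc_lessD)
qed simp

lemma card_le_H:
  assumes "F \<subseteq> hamilton_paths m"
    and "\<forall>P\<in>F. \<forall>Q\<in>F. P \<noteq> Q \<longrightarrow> contains_subgraph (P \<union> Q) V EG"
  shows "card F \<le> H m V EG"
proof -
  let ?X = "{card F | F. F \<subseteq> hamilton_paths m \<and>
      (\<forall>P\<in>F. \<forall>Q\<in>F. P \<noteq> Q \<longrightarrow> contains_subgraph (P \<union> Q) V EG)}"
  have "?X \<subseteq> card ` Pow (hamilton_paths m)" by auto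
  then have "finite ?X" by (rule finite_subset) (simp add: finite_hamilton_paths)
  moreover have "card F \<in> ?X" using assms by blast
  ultimately show ?thesis unfolding H_def by simp
qed

lemma two_power_le_H_K23: "2 ^ m \<le> H (5 * m) K23_V K23_E"
proof -
  let ?path = "\<lambda>A. path_edges (blocks_path A m)"
  have "inj_on ?path (Pow {0..<m})"
  proof (rule inj_onI, rule ccontr)
    fix A B assume "A \<in> Pow {0..<m}" "B \<in> Pow {0..<m}" "?path A = ?path B" "A \<noteq> B"
    then have "contains_subgraph (?path A) K23_V K23_E"
      using blocks_paths_union_contains_K23[of A m B] by auto
    then show False using path_not_contains_K23 blocks_path_hamiltonian by blast
  qed
  then have "card (?path ` Pow {0..<m}) = 2 ^ m"
    by (simp add: card_image card_Pow)
  moreover have "card (?path ` Pow {0..<m}) \<le> H (5 * m) K23_V K23_E"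
  proof (rule card_le_H)
    show "?path ` Pow {0..<m} \<subseteq> hamilton_paths (5 * m)"
      using blocks_path_in_hamilton_paths by blast
    show "\<forall>P\<in>?path ` Pow {0..<m}. \<forall>Q\<in>?path ` Pow {0..<m}.
            P \<noteq> Q \<longrightarrow> contains_subgraph (P \<union> Q) K23_V K23_E"
      using blocks_paths_union_contains_K23 by blast
  qed
  ultimately show ?thesis by simp
qed

lemma golden_ratio_power_5_le_16: "((1 + sqrt 5) / 2) ^ 5 \<le> (16::real)"
proof -
  have "sqrt 5 \<le> sqrt ((12/5)\<^sup>2)" by (rule real_sqrt_le_mono) (simp add: power2_eq_square)
  then have "sqrt 5 \<le> 12/5" by simp
  then have "((1 + sqrt 5) / 2) ^ 5 \<le> (17/10::real) ^ 5" by (intro power_mono) auto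
  also have "\<dots> \<le> 16" by (simp add: eval_nat_numeral)
  finally show ?thesis .
qed

lemma golden_ratio_powr_le_H_K23:
  "((1 + sqrt 5) / 2) powr real (5 * k) \<le> real (H (4 * (5 * k)) K23_V K23_E)"
proof -
  let ?\<phi> = "(1 + sqrt 5) / 2 :: real"
  have "?\<phi> powr real (5 * k) = ?\<phi> ^ (5 * k)"
    by (rule powr_realpow) (simp add: add_pos_nonneg)
  also have "\<dots> = (?\<phi> ^ 5) ^ k" by (simp add: power_mult)
  also have "\<dots> \<le> 16 ^ k"
    by (rule power_mono[OF golden_ratio_power_5_le_16]) (simp add: add_pos_nonneg)
  also have "\<dots> = real (2 ^ (4 * k))" by (simp add: power_mult)
  also have "\<dots> \<le> real (H (5 * (4 * k)) K23_V K23_E)"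
    using two_power_le_H_K23 of_nat_le_iff by blast
  finally show ?thesis by (simp add: mult.left_commute)
qed

theorem mainTheorem4:
  shows "\<exists>S :: nat set. infinite S \<and> (\<forall>n\<in>S. n > 0) \<and>
    (\<exists>f :: nat \<Rightarrow> real.
       (\<forall>\<epsilon>>0. \<exists>N. \<forall>n\<in>S. n \<ge> N \<longrightarrow> \<bar>f n\<bar> \<le> \<epsilon> * real n) \<and>
       (\<forall>n\<in>S. real (H (4 * n) K23_V K23_E) \<ge> ((1 + sqrt 5) / 2) powr (real n - f n)))"
proof (intro exI conjI)
  let ?S = "{5 * k | k :: nat. k > 0}"
  show "infinite ?S"
    unfolding infinite_nat_iff_unbounded
  proof
    fix m :: nat
    have "5 * Suc m \<in> ?S" by blast
    moreover have "m < 5 * Suc m" by simp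
    ultimately show "\<exists>n>m. n \<in> ?S" by blast
  qed
  show "\<forall>n\<in>?S. n > 0" by auto
  show "\<forall>\<epsilon>>0. \<exists>N. \<forall>n\<in>?S. n \<ge> N \<longrightarrow> \<bar>(\<lambda>_. 0::real) n\<bar> \<le> \<epsilon> * real n" by auto
  show "\<forall>n\<in>?S. real (H (4 * n) K23_V K23_E) \<ge> ((1 + sqrt 5) / 2) powr (real n - (\<lambda>_. 0) n)"
    using golden_ratio_powr_le_H_K23 by auto
qed

end
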